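(* Let $L$ be a finite lattice and $\Theta$ a lattice congruence on $L$ such that no atom of $L$ is congruent to $\hat0$ and no coatom of $L$ is congruent to $\hat1$. Then the proper part of $L$ is homotopy equivalent to the proper part of $L/\Theta$.
   Context: A lattice congruence is an equivalence relation respecting joins and meets; $L/\Theta$ is the quotient lattice of classes ($[a]\le[b]$ iff some $x\in[a]$, $y\in[b]$ have $x\le y$). $\hat0,\hat1$ are the minimum and maximum; atoms cover $\hat0$, coatoms are covered by $\hat1$. The proper part of a finite lattice is the poset obtained by removing $\hat0$ and $\hat1$; topological statements about a poset refer to its order complex (the simplicial complex of its chains). *)

theory Defs
  imports "HOL-Analysis.Analysis"
begin

text \<open>Geometric realization of the order complex of a finite poset (P, le):
  points are convex combinations (barycentric coordinates f, supported on P)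
  whose support is a chain of (P, le), with the topology induced from the
  product topology on real-valued functions on P.\<close>
definition order_complex_space :: "'a set \<Rightarrow> ('a \<Rightarrow> 'a \<Rightarrow> bool) \<Rightarrow> ('a \<Rightarrow> real) topology" where
  "order_complex_space P le =
     subtopology (product_topology (\<lambda>_. euclideanreal) P)
       {f. f \<in> extensional P \<and> (\<forall>x\<in>P. 0 \<le> f x) \<and> sum f P = 1 \<and>
           (\<forall>x\<in>P. \<forall>y\<in>P. 0 < f x \<and> 0 < f y \<longrightarrow> le x y \<or> le y x)}"

definition lattice_congruence :: "('a::lattice \<times> 'a) set \<Rightarrow> bool" where
  "lattice_congruence R \<longleftrightarrow> equiv UNIV R \<and>
     (\<forall>x y x' y'. (x, y) \<in> R \<and> (x', y') \<in> R \<longrightarrow>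
        (sup x x', sup y y') \<in> R \<and> (inf x x', inf y y') \<in> R)"

definition is_atom :: "'a::bounded_lattice \<Rightarrow> bool" where
  "is_atom a \<longleftrightarrow> bot < a \<and> \<not> (\<exists>z. bot < z \<and> z < a)"

definition is_coatom :: "'a::bounded_lattice \<Rightarrow> bool" where
  "is_coatom a \<longleftrightarrow> a < top \<and> \<not> (\<exists>z. a < z \<and> z < top)"

definition quot_le :: "'a::order set \<Rightarrow> 'a set \<Rightarrow> bool" where
  "quot_le A B \<longleftrightarrow> (\<exists>x\<in>A. \<exists>y\<in>B. x \<le> y)"

definition proper_part :: "'a::bounded_lattice set" where
  "proper_part = UNIV - {bot, top}"

definition quot_proper_part :: "('a::bounded_lattice \<times> 'a) set \<Rightarrow> 'a set set" where
  "quot_proper_part R = (UNIV // R) - {R `` {bot}, R `` {top}}"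

end

theory Submission
  imports Defs
begin

text \<open>
  The class map \<open>x \<mapsto> [x]\<close> and the map sending a class to its least element (classes of a
  finite lattice are closed under meets) are both order-preserving. The hypothesis on atoms
  and coatoms says precisely that \<open>[bot] = {bot}\<close> and \<open>[top] = {top}\<close>, so both maps restrict
  to the proper parts. One composite is the identity of the quotient and the other is
  \<open>x \<mapsto> min [x] \<le> x\<close>; comparable order-preserving maps induce homotopic maps of order
  complexes.
\<close>

section \<open>Order complexes and induced maps\<close>

definition order_complex_points :: "'a set \<Rightarrow> ('a \<Rightarrow> 'a \<Rightarrow> bool) \<Rightarrow> ('a \<Rightarrow> real) set" where
  "order_complex_points P le =
     {f. f \<in> extensional P \<and> (\<forall>x\<in>P. 0 \<le> f x) \<and> sum f P = 1 \<and>
         (\<forall>x\<in>P. \<forall>y\<in>P. 0 < f x \<and> 0 < f y \<longrightarrow> le x y \<or> le y x)}"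

lemma order_complex_space_eq:
  "order_complex_space P le =
     subtopology (product_topology (\<lambda>_. euclideanreal) P) (order_complex_points P le)"
  unfolding order_complex_space_def order_complex_points_def by simp

lemma topspace_order_complex_space [simp]:
  "topspace (order_complex_space P le) = order_complex_points P le"
  unfolding order_complex_space_eq by (auto simp: order_complex_points_def PiE_def)

lemma continuous_map_order_complex_coordinate:
  "x \<in> P \<Longrightarrow> continuous_map (order_complex_space P le) euclideanreal (\<lambda>p. p x)"
  unfolding order_complex_space_eq
  by (metis continuous_map_from_subtopology continuous_map_product_projection)

lemma continuous_map_into_order_complex_space:
  assumes "\<And>z. z \<in> P \<Longrightarrow> continuous_map X euclideanreal (\<lambda>u. k u z)"
    and "\<And>u. u \<in> topspace X \<Longrightarrow> k u \<in> order_complex_points P le"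
  shows "continuous_map X (order_complex_space P le) k"
  unfolding order_complex_space_eq continuous_map_in_subtopology continuous_map_componentwise
  using assms by (auto simp: order_complex_points_def)

definition pushforward :: "('a \<Rightarrow> 'b) \<Rightarrow> 'a set \<Rightarrow> 'b set \<Rightarrow> ('a \<Rightarrow> real) \<Rightarrow> 'b \<Rightarrow> real" where
  "pushforward g P Q p = restrict (\<lambda>y. sum p {x\<in>P. g x = y}) Q"

lemma pushforward_in_order_complex_points:
  assumes fin: "finite P" "finite Q" and gPQ: "g ` P \<subseteq> Q"
    and nonneg: "\<And>x. x \<in> P \<Longrightarrow> 0 \<le> p x" and sum1: "sum p P = 1"
    and chain: "\<And>x y. \<lbrakk>x \<in> P; y \<in> P; 0 < p x; 0 < p y\<rbrakk> \<Longrightarrow> le (g x) (g y) \<or> le (g y) (g x)"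
  shows "pushforward g P Q p \<in> order_complex_points Q le"
proof -
  have "sum (pushforward g P Q p) Q = (\<Sum>y\<in>Q. sum p {x\<in>P. g x = y})"
    by (simp add: pushforward_def)
  also have "\<dots> = 1"
    using sum.group[OF fin gPQ, of p] sum1 by simp
  finally have "sum (pushforward g P Q p) Q = 1" .
  moreover have "0 \<le> pushforward g P Q p y" if "y \<in> Q" for y
    using nonneg that by (auto simp: pushforward_def intro!: sum_nonneg)
  moreover have support: "\<exists>x\<in>P. g x = y \<and> 0 < p x"
    if "y \<in> Q" "0 < pushforward g P Q p y" for y
  proof (rule ccontr)
    assume "\<not> ?thesis"
    then have "sum p {x\<in>P. g x = y} \<le> 0"
      using nonneg by (intro sum_nonpos) force
    then show False
      using that by (simp add: pushforward_def)
  qed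
  moreover have "le y y' \<or> le y' y"
    if "y \<in> Q" "y' \<in> Q" "0 < pushforward g P Q p y" "0 < pushforward g P Q p y'" for y y'
    using support[OF that(1,3)] support[OF that(2,4)] chain by blast
  moreover have "pushforward g P Q p \<in> extensional Q"
    by (simp add: pushforward_def)
  ultimately show ?thesis
    unfolding order_complex_points_def by blast
qed

lemma continuous_map_pushforward:
  assumes "finite S"
    and "\<And>x. x \<in> S \<Longrightarrow> continuous_map X euclideanreal (\<lambda>u. w u x)"
    and "\<And>u. u \<in> topspace X \<Longrightarrow> pushforward g S Q (w u) \<in> order_complex_points Q le"
  shows "continuous_map X (order_complex_space Q le) (\<lambda>u. pushforward g S Q (w u))"
proof (rule continuous_map_into_order_complex_space)
  fix z assume "z \<in> Q"
  then have "(\<lambda>u. pushforward g S Q (w u) z) = (\<lambda>u. sum (w u) {x\<in>S. g x = z})"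
    by (simp add: pushforward_def)
  moreover have "continuous_map X euclideanreal (\<lambda>u. sum (w u) {x\<in>S. g x = z})"
    using assms(1,2) by (intro continuous_map_sum) auto
  ultimately show "continuous_map X euclideanreal (\<lambda>u. pushforward g S Q (w u) z)"
    by simp
qed (rule assms(3))

lemma continuous_map_pushforward_monotone:
  assumes "finite P" "finite Q" "g ` P \<subseteq> Q" and mono: "monotone_on P le le' g"
  shows "continuous_map (order_complex_space P le) (order_complex_space Q le') (pushforward g P Q)"
proof -
  have in_points: "pushforward g P Q p \<in> order_complex_points Q le'"
    if p: "p \<in> order_complex_points P le" for p
  proof (rule pushforward_in_order_complex_points)
    fix x y assume "x \<in> P" "y \<in> P" "0 < p x" "0 < p y"
    then have "le x y \<or> le y x"
      using p by (auto simp: order_complex_points_def)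
    then show "le' (g x) (g y) \<or> le' (g y) (g x)"
      using monotone_onD[OF mono] \<open>x \<in> P\<close> \<open>y \<in> P\<close> by blast
  qed (use p assms(1-3) in \<open>simp_all add: order_complex_points_def\<close>)
  show ?thesis
    using continuous_map_pushforward[of P "order_complex_space P le" "\<lambda>p. p" g Q le']
    by (simp add: assms(1) continuous_map_order_complex_coordinate in_points)
qed

lemma pushforward_compose:
  assumes fin: "finite P" "finite Q" and gPQ: "g ` P \<subseteq> Q"
  shows "pushforward g' Q S (pushforward g P Q p) = pushforward (g' \<circ> g) P S p"
proof (rule ext)
  fix y
  have "(\<Sum>z\<in>{z\<in>Q. g' z = y}. sum p {x\<in>P. g x = z}) = sum p (\<Union>z\<in>{z\<in>Q. g' z = y}. {x\<in>P. g x = z})"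
    using fin by (intro sum.UNION_disjoint[symmetric]) auto
  also have "(\<Union>z\<in>{z\<in>Q. g' z = y}. {x\<in>P. g x = z}) = {x\<in>P. (g' \<circ> g) x = y}"
    using gPQ by auto
  finally show "pushforward g' Q S (pushforward g P Q p) y = pushforward (g' \<circ> g) P S p y"
    by (simp add: pushforward_def)
qed

lemma pushforward_id:
  assumes "p \<in> extensional P"
  shows "pushforward id P P p = p"
proof (rule ext)
  fix y
  have "y \<in> P \<Longrightarrow> {x\<in>P. id x = y} = {y}" by auto
  then show "pushforward id P P p y = p y"
    using assms by (simp add: pushforward_def extensional_def)
qed

lemma pushforward_cong:
  "(\<And>x. x \<in> P \<Longrightarrow> g x = h x) \<Longrightarrow> pushforward g P Q = pushforward h P Q"
  unfolding pushforward_def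
  by (intro ext) (auto intro!: arg_cong[where f="sum _"])

lemma pushforward_Plus:
  assumes "finite A" "finite B" "z \<in> Q"
  shows "pushforward (case_sum g h) (A <+> B) Q w z =
           pushforward g A Q (w \<circ> Inl) z + pushforward h B Q (w \<circ> Inr) z"
proof -
  have "{u \<in> A <+> B. case_sum g h u = z} = {x\<in>A. g x = z} <+> {x\<in>B. h x = z}"
    by auto
  then show ?thesis
    using assms by (simp add: pushforward_def sum.Plus)
qed

section \<open>Comparable order-preserving maps are homotopic\<close>

text \<open>
  The straight-line homotopy between the pushforwards along \<open>g \<le> h\<close> leaves the order
  complex: for \<open>x < x'\<close> the points \<open>h x\<close> and \<open>g x'\<close> need not be comparable. Instead, the
  support of \<open>p\<close> is a chain and each of its elements \<open>x\<close> owns the subinterval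
  \<open>[mass_below P p x, mass_below P p x + p x]\<close> of \<open>[0, 1]\<close>; at time \<open>t\<close> the part of it
  above \<open>1 - t\<close> has moved from \<open>g x\<close> to \<open>h x\<close>. Mass thus moves from the top of the chain
  down, so \<open>h x\<close> and \<open>g x'\<close> never carry weight at the same time. The two parts are recorded
  on the two copies of \<open>P\<close> in \<open>P <+> P\<close>, making the homotopy a pushforward along
  \<open>case_sum g h\<close>.
\<close>

definition mass_below :: "'a::order set \<Rightarrow> ('a \<Rightarrow> real) \<Rightarrow> 'a \<Rightarrow> real" where
  "mass_below P p x = sum p {y\<in>P. y < x}"

definition unmoved_weight :: "'a::order set \<Rightarrow> real \<Rightarrow> ('a \<Rightarrow> real) \<Rightarrow> 'a \<Rightarrow> real" where
  "unmoved_weight P t p x = max 0 (min (mass_below P p x + p x) (1 - t) - mass_below P p x)"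

definition split_weight :: "'a::order set \<Rightarrow> real \<Rightarrow> ('a \<Rightarrow> real) \<Rightarrow> 'a + 'a \<Rightarrow> real" where
  "split_weight P t p = case_sum (unmoved_weight P t p) (\<lambda>x. p x - unmoved_weight P t p x)"

lemma unmoved_weight_bounds:
  "0 \<le> p x \<Longrightarrow> 0 \<le> unmoved_weight P t p x \<and> unmoved_weight P t p x \<le> p x"
  by (auto simp: unmoved_weight_def)

lemma mass_below_less:
  assumes "finite P" "\<And>y. y \<in> P \<Longrightarrow> 0 \<le> p y" "x \<in> P" "x < x'"
  shows "mass_below P p x + p x \<le> mass_below P p x'"
proof -
  have "mass_below P p x + p x = sum p (insert x {y\<in>P. y < x})"
    using assms(1) by (simp add: mass_below_def add.commute)
  also have "\<dots> \<le> sum p {y\<in>P. y < x'}"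
    using assms by (intro sum_mono2) (auto intro: less_trans)
  finally show ?thesis
    by (simp add: mass_below_def)
qed

lemma unmoved_weight_eq_0_above:
  assumes "finite P" "\<And>y. y \<in> P \<Longrightarrow> 0 \<le> p y" "x \<in> P" "x < x'"
    and "unmoved_weight P t p x < p x"
  shows "unmoved_weight P t p x' = 0"
  using mass_below_less[of P p x x'] assms
  by (auto simp: unmoved_weight_def)

lemma split_weight_chain:
  fixes P :: "'a::order set" and g h :: "'a \<Rightarrow> 'b::order"
  assumes fin: "finite P" and p: "p \<in> order_complex_points P (\<le>)"
    and g: "mono_on P g" and h: "mono_on P h" and gh: "\<And>x. x \<in> P \<Longrightarrow> g x \<le> h x"
    and u: "u \<in> P <+> P" "0 < split_weight P t p u"
    and v: "v \<in> P <+> P" "0 < split_weight P t p v"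
  shows "case_sum g h u \<le> case_sum g h v \<or> case_sum g h v \<le> case_sum g h u"
proof -
  have nonneg: "\<And>x. x \<in> P \<Longrightarrow> 0 \<le> p x"
    using p by (simp add: order_complex_points_def)
  have base_pos: "0 < p (case_sum id id w)" if "w \<in> P <+> P" "0 < split_weight P t p w" for w
    using that nonneg unmoved_weight_bounds[of p _ P t]
    by (force simp: split_weight_def)
  have comparable: "x \<le> y \<or> y \<le> x" if "x \<in> P" "y \<in> P" "0 < p x" "0 < p y" for x y
    using p that by (simp add: order_complex_points_def)
  have cross: "g x \<le> h y"
    if "x \<in> P" "y \<in> P" "0 < p x" "0 < p y"
      and "0 < unmoved_weight P t p x" "unmoved_weight P t p y < p y" for x y
  proof (cases "x \<le> y")
    case True
    show ?thesis
      using gh[OF that(1)] monotone_onD[OF h that(1,2) True] by (rule order_trans)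
  next
    case False
    then have "y < x"
      using comparable[OF that(1-4)] by simp
    then show ?thesis
      using unmoved_weight_eq_0_above[OF fin nonneg that(2)] that(5,6) by auto
  qed
  obtain x where x: "x \<in> P" "u = Inl x \<or> u = Inr x"
    using u(1) by auto
  obtain y where y: "y \<in> P" "v = Inl y \<or> v = Inr y"
    using v(1) by auto
  have "0 < p x" "0 < p y"
    using base_pos[OF u] base_pos[OF v] x y by auto
  then have "x \<le> y \<or> y \<le> x"
    using comparable x y by blast
  then show ?thesis
    using x(2) y(2) u(2) v(2) cross[OF x(1) y(1)] cross[OF y(1) x(1)]
      monotone_onD[OF g x(1) y(1)] monotone_onD[OF g y(1) x(1)]
      monotone_onD[OF h x(1) y(1)] monotone_onD[OF h y(1) x(1)]
      \<open>0 < p x\<close> \<open>0 < p y\<close>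
    by (auto simp: split_weight_def)
qed

lemma unmoved_weight_0:
  assumes "finite P" "p \<in> order_complex_points P (\<le>)" "x \<in> P"
  shows "unmoved_weight P 0 p x = p x"
proof -
  have "mass_below P p x + p x = sum p (insert x {y\<in>P. y < x})"
    using assms(1) by (simp add: mass_below_def add.commute)
  also have "\<dots> \<le> sum p P"
    using assms by (intro sum_mono2) (auto simp: order_complex_points_def)
  finally show ?thesis
    using assms(2,3) by (auto simp: unmoved_weight_def order_complex_points_def)
qed

lemma unmoved_weight_1:
  assumes "p \<in> order_complex_points P (\<le>)"
  shows "unmoved_weight P 1 p x = 0"
proof -
  have "0 \<le> mass_below P p x"
    using assms unfolding mass_below_def order_complex_points_def by (auto intro: sum_nonneg)
  then show ?thesis
    by (simp add: unmoved_weight_def)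
qed

lemma pushforward_split_weight_0:
  assumes "finite P" "p \<in> order_complex_points P (\<le>)"
  shows "pushforward (case_sum g h) (P <+> P) Q (split_weight P 0 p) = pushforward g P Q p"
proof (rule ext)
  fix z
  show "pushforward (case_sum g h) (P <+> P) Q (split_weight P 0 p) z = pushforward g P Q p z"
    using assms
    by (cases "z \<in> Q")
       (simp_all add: pushforward_Plus, simp_all add: pushforward_def split_weight_def unmoved_weight_0)
qed

lemma pushforward_split_weight_1:
  assumes "finite P" "p \<in> order_complex_points P (\<le>)"
  shows "pushforward (case_sum g h) (P <+> P) Q (split_weight P 1 p) = pushforward h P Q p"
proof (rule ext)
  fix z
  show "pushforward (case_sum g h) (P <+> P) Q (split_weight P 1 p) z = pushforward h P Q p z"
    using assms
    by (cases "z \<in> Q")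
       (simp_all add: pushforward_Plus, simp_all add: pushforward_def split_weight_def unmoved_weight_1)
qed

lemma continuous_map_split_weight:
  assumes "finite P" "w \<in> P <+> P"
  shows "continuous_map (prod_topology (top_of_set {0..1}) (order_complex_space P le)) euclideanreal
           (\<lambda>q. split_weight P (fst q) (snd q) w)"
proof -
  let ?X = "prod_topology (top_of_set {0..1::real}) (order_complex_space P le)"
  have coordinate: "continuous_map ?X euclideanreal (\<lambda>q. snd q x)" if "x \<in> P" for x
    using continuous_map_compose[OF continuous_map_snd continuous_map_order_complex_coordinate[OF that]]
    by (simp add: o_def)
  have "continuous_map ?X euclideanreal fst"
    by (metis continuous_map_fst continuous_map_in_subtopology)
  then have "continuous_map ?X euclideanreal (\<lambda>q. unmoved_weight P (fst q) (snd q) x)" if "x \<in> P" for x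
    unfolding unmoved_weight_def mass_below_def
    using assms(1) coordinate that by (intro continuous_intros) auto
  then show ?thesis
    using assms(2) coordinate by (auto simp: split_weight_def intro!: continuous_map_diff)
qed

lemma split_weight_in_order_complex_points:
  fixes P :: "'a::order set" and Q :: "'b::order set"
  assumes fin: "finite P" "finite Q" and "g ` P \<subseteq> Q" "h ` P \<subseteq> Q"
    and g: "mono_on P g" and h: "mono_on P h" and gh: "\<And>x. x \<in> P \<Longrightarrow> g x \<le> h x"
    and p: "p \<in> order_complex_points P (\<le>)"
  shows "pushforward (case_sum g h) (P <+> P) Q (split_weight P t p) \<in> order_complex_points Q (\<le>)"
proof (rule pushforward_in_order_complex_points)
  have nonneg: "\<And>x. x \<in> P \<Longrightarrow> 0 \<le> p x"
    using p by (simp add: order_complex_points_def)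
  then show "0 \<le> split_weight P t p w" if "w \<in> P <+> P" for w
    using that unmoved_weight_bounds[of p _ P t] by (force simp: split_weight_def)
  show "sum (split_weight P t p) (P <+> P) = 1"
    using fin p by (simp add: sum.Plus split_weight_def sum_subtractf order_complex_points_def)
qed (use assms split_weight_chain[OF fin(1) p g h gh] in auto)

lemma homotopic_pushforward_if_le:
  fixes P :: "'a::order set" and Q :: "'b::order set"
  assumes fin: "finite P" "finite Q" and "g ` P \<subseteq> Q" "h ` P \<subseteq> Q"
    and "mono_on P g" "mono_on P h" "\<And>x. x \<in> P \<Longrightarrow> g x \<le> h x"
  shows "homotopic_with (\<lambda>_. True) (order_complex_space P (\<le>)) (order_complex_space Q (\<le>))
           (pushforward g P Q) (pushforward h P Q)"
proof -
  define H where "H q = pushforward (case_sum g h) (P <+> P) Q (split_weight P (fst q) (snd q))"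
    for q :: "real \<times> ('a \<Rightarrow> real)"
  have "continuous_map (prod_topology (top_of_set {0..1}) (order_complex_space P (\<le>)))
          (order_complex_space Q (\<le>)) H"
    unfolding H_def
    using fin split_weight_in_order_complex_points[OF assms]
    by (intro continuous_map_pushforward continuous_map_split_weight) auto
  then have "homotopic_with (\<lambda>_. True) (order_complex_space P (\<le>)) (order_complex_space Q (\<le>))
               (\<lambda>p. H (0, p)) (\<lambda>p. H (1, p))"
    unfolding homotopic_with_def by blast
  then show ?thesis
    by (rule homotopic_with_eq)
       (simp_all add: H_def pushforward_split_weight_0 pushforward_split_weight_1 fin)
qed

lemma homotopy_equivalent_order_complex_if_retraction:
  fixes P :: "'a::order set"
  assumes fin: "finite P" "finite Q" and fPQ: "f ` P \<subseteq> Q" and gQP: "g ` Q \<subseteq> P"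
    and f: "monotone_on P (\<le>) le f" and g: "monotone_on Q le (\<le>) g"
    and gf: "\<And>x. x \<in> P \<Longrightarrow> g (f x) \<le> x" and fg: "\<And>y. y \<in> Q \<Longrightarrow> f (g y) = y"
  shows "order_complex_space P (\<le>) homotopy_equivalent_space order_complex_space Q le"
proof -
  have cont_f: "continuous_map (order_complex_space P (\<le>)) (order_complex_space Q le) (pushforward f P Q)"
    by (rule continuous_map_pushforward_monotone[OF fin fPQ f])
  have cont_g: "continuous_map (order_complex_space Q le) (order_complex_space P (\<le>)) (pushforward g Q P)"
    by (rule continuous_map_pushforward_monotone[OF fin(2,1) gQP g])
  have "mono_on P (g \<circ> f)"
  proof (rule monotone_onI)
    fix x y assume "x \<in> P" "y \<in> P" "x \<le> y"
    then show "(g \<circ> f) x \<le> (g \<circ> f) y"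
      using fPQ monotone_onD[OF f] monotone_onD[OF g] by (simp add: image_subset_iff)
  qed
  then have "homotopic_with (\<lambda>_. True) (order_complex_space P (\<le>)) (order_complex_space P (\<le>))
               (pushforward (g \<circ> f) P P) (pushforward id P P)"
    using fPQ gQP gf by (intro homotopic_pushforward_if_le fin) (auto simp: monotone_on_def image_subset_iff)
  then have gf_id: "homotopic_with (\<lambda>_. True) (order_complex_space P (\<le>)) (order_complex_space P (\<le>))
                      (pushforward g Q P \<circ> pushforward f P Q) id"
    by (rule homotopic_with_eq)
       (auto simp: pushforward_compose[OF fin fPQ] pushforward_id order_complex_points_def)
  have "pushforward f P Q (pushforward g Q P p) = p" if "p \<in> order_complex_points Q le" for p
  proof -
    have "pushforward f P Q (pushforward g Q P p) = pushforward (f \<circ> g) Q Q p"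
      by (rule pushforward_compose[OF fin(2,1) gQP])
    also have "\<dots> = pushforward id Q Q p"
      using fg by (intro fun_cong[OF pushforward_cong]) simp
    finally show ?thesis
      using that by (simp add: pushforward_id order_complex_points_def)
  qed
  then have fg_id: "homotopic_with (\<lambda>_. True) (order_complex_space Q le) (order_complex_space Q le)
                      (pushforward f P Q \<circ> pushforward g Q P) id"
    by (intro homotopic_with_equal continuous_map_compose[OF cont_g cont_f]) auto
  show ?thesis
    unfolding homotopy_equivalent_space_def using cont_f cont_g gf_id fg_id by blast
qed

section \<open>Classes of a lattice congruence\<close>

lemma lattice_congruence_equiv: "lattice_congruence R \<Longrightarrow> equiv UNIV R"
  by (simp add: lattice_congruence_def)

lemma lattice_congruence_refl: "lattice_congruence R \<Longrightarrow> (x, x) \<in> R"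
  by (meson UNIV_I equiv_def lattice_congruence_equiv refl_onD)

lemma lattice_congruence_inf:
  "lattice_congruence R \<Longrightarrow> (x, y) \<in> R \<Longrightarrow> (x', y') \<in> R \<Longrightarrow> (inf x x', inf y y') \<in> R"
  by (simp add: lattice_congruence_def)

lemma lattice_congruence_sup:
  "lattice_congruence R \<Longrightarrow> (x, y) \<in> R \<Longrightarrow> (x', y') \<in> R \<Longrightarrow> (sup x x', sup y y') \<in> R"
  by (simp add: lattice_congruence_def)

lemma exists_atom_le:
  fixes x :: "'a::{finite, bounded_lattice}"
  assumes "x \<noteq> bot"
  shows "\<exists>a. is_atom a \<and> a \<le> x"
proof -
  have "{z. bot < z \<and> z \<le> x} \<noteq> {}"
    using assms bot.not_eq_extremum by blast
  then obtain a where a: "bot < a" "a \<le> x" "\<And>z. bot < z \<Longrightarrow> z \<le> a \<Longrightarrow> z = a"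
    using finite_has_minimal[of "{z. bot < z \<and> z \<le> x}"] by (auto intro: order_trans)
  then have "is_atom a"
    unfolding is_atom_def using less_le_not_le by blast
  with a show ?thesis by blast
qed

lemma exists_coatom_ge:
  fixes x :: "'a::{finite, bounded_lattice}"
  assumes "x \<noteq> top"
  shows "\<exists>a. is_coatom a \<and> x \<le> a"
proof -
  have "{z. z < top \<and> x \<le> z} \<noteq> {}"
    using assms top.not_eq_extremum by blast
  then obtain a where a: "a < top" "x \<le> a" "\<And>z. z < top \<Longrightarrow> a \<le> z \<Longrightarrow> z = a"
    using finite_has_maximal[of "{z. z < top \<and> x \<le> z}"] by (auto intro: order_trans)
  then have "is_coatom a"
    unfolding is_coatom_def using less_le_not_le by blast
  with a show ?thesis by blast
qed

lemma lattice_congruence_bot_class: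
  fixes R :: "('a::{finite, bounded_lattice} \<times> 'a) set"
  assumes lc: "lattice_congruence R" and atoms: "\<forall>a. is_atom a \<longrightarrow> (a, bot) \<notin> R"
    and "(x, bot) \<in> R"
  shows "x = bot"
proof (rule ccontr)
  assume "x \<noteq> bot"
  then obtain a where "is_atom a" "a \<le> x"
    using exists_atom_le by blast
  moreover have "(inf a x, inf a bot) \<in> R"
    using lattice_congruence_inf[OF lc lattice_congruence_refl[OF lc] assms(3)] .
  ultimately show False
    using atoms by (simp add: inf_absorb1)
qed

lemma lattice_congruence_top_class:
  fixes R :: "('a::{finite, bounded_lattice} \<times> 'a) set"
  assumes lc: "lattice_congruence R" and coatoms: "\<forall>a. is_coatom a \<longrightarrow> (a, top) \<notin> R"
    and "(x, top) \<in> R"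
  shows "x = top"
proof (rule ccontr)
  assume "x \<noteq> top"
  then obtain a where "is_coatom a" "x \<le> a"
    using exists_coatom_ge by blast
  moreover have "(sup a x, sup a top) \<in> R"
    using lattice_congruence_sup[OF lc lattice_congruence_refl[OF lc] assms(3)] .
  ultimately show False
    using coatoms by (simp add: sup_absorb1)
qed

lemma equiv_class_of_member:
  assumes "equiv UNIV R" "C \<in> UNIV // R" "x \<in> C"
  shows "R `` {x} = C"
  using assms by (metis equiv_class_eq quotientE Image_singleton_iff)

lemma lattice_congruence_class_least:
  fixes R :: "('a::{finite, lattice} \<times> 'a) set"
  assumes lc: "lattice_congruence R" and C: "C \<in> UNIV // R"
  shows "(LEAST x. x \<in> C) \<in> C" and "\<And>y. y \<in> C \<Longrightarrow> (LEAST x. x \<in> C) \<le> y"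
proof -
  have eqv: "equiv UNIV R"
    using lc by (rule lattice_congruence_equiv)
  have inf_closed: "inf y y' \<in> C" if "y \<in> C" "y' \<in> C" for y y'
  proof -
    have "(y, y') \<in> R"
      using in_quotient_imp_in_rel[OF eqv C] that by blast
    then have "(inf y y, inf y y') \<in> R"
      by (rule lattice_congruence_inf[OF lc lattice_congruence_refl[OF lc]])
    then show ?thesis
      using in_quotient_imp_closed[OF eqv C that(1)] by simp
  qed
  obtain m where m: "m \<in> C" and minimal: "\<And>y. y \<in> C \<Longrightarrow> y \<le> m \<Longrightarrow> m = y"
    using finite_has_minimal[of C] in_quotient_imp_non_empty[OF eqv C] by auto
  have least: "m \<le> y" if "y \<in> C" for y
    using minimal[OF inf_closed[OF m that]] by (metis inf.cobounded1 inf.cobounded2)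
  have "(LEAST x. x \<in> C) = m"
    using m least by (rule Least_equality)
  then show "(LEAST x. x \<in> C) \<in> C" and "\<And>y. y \<in> C \<Longrightarrow> (LEAST x. x \<in> C) \<le> y"
    using m least by simp_all
qed

lemma lattice_congruence_class_least_mono:
  fixes R :: "('a::{finite, lattice} \<times> 'a) set"
  assumes lc: "lattice_congruence R" and A: "A \<in> UNIV // R" and B: "B \<in> UNIV // R"
    and "quot_le A B"
  shows "(LEAST x. x \<in> A) \<le> (LEAST x. x \<in> B)"
proof -
  define a b where "a = (LEAST x. x \<in> A)" and "b = (LEAST x. x \<in> B)"
  have eqv: "equiv UNIV R"
    using lc by (rule lattice_congruence_equiv)
  obtain x y where xy: "x \<in> A" "y \<in> B" "x \<le> y"
    using \<open>quot_le A B\<close> unfolding quot_le_def by blast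
  have "a \<in> A" "b \<in> B" and a_least: "\<And>z. z \<in> A \<Longrightarrow> a \<le> z"
    unfolding a_def b_def using lattice_congruence_class_least[OF lc A] lattice_congruence_class_least[OF lc B]
    by simp_all
  then have "(a, x) \<in> R" "(b, y) \<in> R"
    using in_quotient_imp_in_rel[OF eqv A] in_quotient_imp_in_rel[OF eqv B] xy by blast+
  then have "(inf a b, inf x y) \<in> R"
    by (rule lattice_congruence_inf[OF lc])
  then have "(x, inf a b) \<in> R"
    using xy(3) eqv by (simp add: inf_absorb1 equiv_def sym_def)
  then have "a \<le> inf a b"
    using a_least in_quotient_imp_closed[OF eqv A xy(1)] by blast
  then show ?thesis
    by (simp add: a_def b_def)
qed

lemma lattice_congruence_class_in_quot_proper_part:
  fixes R :: "('a::{finite, bounded_lattice} \<times> 'a) set"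
  assumes lc: "lattice_congruence R"
    and atoms: "\<forall>a. is_atom a \<longrightarrow> (a, bot) \<notin> R"
    and coatoms: "\<forall>a. is_coatom a \<longrightarrow> (a, top) \<notin> R"
    and x: "x \<in> proper_part"
  shows "R `` {x} \<in> quot_proper_part R"
proof -
  have eqv: "equiv UNIV R"
    using lc by (rule lattice_congruence_equiv)
  have "R `` {x} \<noteq> R `` {bot}" "R `` {x} \<noteq> R `` {top}"
    using lattice_congruence_bot_class[OF lc atoms] lattice_congruence_top_class[OF lc coatoms] x
    by (auto simp: eq_equiv_class_iff[OF eqv] proper_part_def)
  then show ?thesis
    by (simp add: quot_proper_part_def quotientI)
qed

lemma lattice_congruence_class_least_in_proper_part:
  fixes R :: "('a::{finite, bounded_lattice} \<times> 'a) set"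
  assumes lc: "lattice_congruence R" and C: "C \<in> quot_proper_part R"
  shows "(LEAST x. x \<in> C) \<in> proper_part"
proof -
  have "C \<in> UNIV // R" "C \<noteq> R `` {bot}" "C \<noteq> R `` {top}"
    using C by (auto simp: quot_proper_part_def)
  moreover have "R `` {LEAST x. x \<in> C} = C"
    using equiv_class_of_member[OF lattice_congruence_equiv[OF lc] \<open>C \<in> UNIV // R\<close>]
      lattice_congruence_class_least(1)[OF lc \<open>C \<in> UNIV // R\<close>] .
  ultimately show ?thesis
    unfolding proper_part_def by force
qed

theorem corollary2p4:
  fixes R :: "('a::{finite, bounded_lattice} \<times> 'a) set"
  assumes "lattice_congruence R"
    and "\<forall>a. is_atom a \<longrightarrow> (a, bot) \<notin> R"
    and "\<forall>a. is_coatom a \<longrightarrow> (a, top) \<notin> R"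
  shows "order_complex_space (proper_part :: 'a set) (\<le>)
           homotopy_equivalent_space
         order_complex_space (quot_proper_part R) quot_le"
proof (rule homotopy_equivalent_order_complex_if_retraction
    [where f = "\<lambda>x. R `` {x}" and g = "\<lambda>C. LEAST x. x \<in> C"])
  note lc = assms(1)
  have quotient: "C \<in> UNIV // R" if "C \<in> quot_proper_part R" for C
    using that by (simp add: quot_proper_part_def)
  show "(\<lambda>x. R `` {x}) ` proper_part \<subseteq> quot_proper_part R"
    using lattice_congruence_class_in_quot_proper_part[OF assms] by blast
  show "(\<lambda>C. LEAST x. x \<in> C) ` quot_proper_part R \<subseteq> proper_part"
    using lattice_congruence_class_least_in_proper_part[OF lc] by blast
  show "monotone_on proper_part (\<le>) quot_le (\<lambda>x. R `` {x})"
    using lattice_congruence_refl[OF lc] unfolding quot_le_def by (blast intro: monotone_onI)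
  show "monotone_on (quot_proper_part R) quot_le (\<le>) (\<lambda>C. LEAST x. x \<in> C)"
    using lattice_congruence_class_least_mono[OF lc] quotient by (blast intro: monotone_onI)
  show "(LEAST y. y \<in> R `` {x}) \<le> x" for x
    using lattice_congruence_class_least(2)[OF lc quotientI] lattice_congruence_refl[OF lc] by blast
  show "R `` {LEAST x. x \<in> C} = C" if "C \<in> quot_proper_part R" for C
    using equiv_class_of_member[OF lattice_congruence_equiv[OF lc] quotient[OF that]]
      lattice_congruence_class_least(1)[OF lc quotient[OF that]] .
qed simp_all

end
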